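(* Let $(X,d)$ be a compact metric space with a finite Borel measure $\mu$. If a surjective map $\psi:X\to X$ is 1-Lipschitz and measure-contracting (i.e. $\mu(A)\le\mu(\psi^{-1}(A))$ for every Borel $A\subset X$), then $\psi$ is a measure-preserving isometry. *)

theory Defs
  imports "HOL-Analysis.Analysis"
begin

definition measure_preserving_map :: "'a measure \<Rightarrow> ('a \<Rightarrow> 'a) \<Rightarrow> bool" where
  "measure_preserving_map M f \<longleftrightarrow>
     f \<in> M \<rightarrow>\<^sub>M M \<and> (\<forall>A\<in>sets M. emeasure M (f -` A \<inter> space M) = emeasure M A)"

end

theory Submission
  imports Defs
begin

text \<open>Choose a right inverse \<open>g\<close> of \<open>\<psi>\<close> on \<open>X\<close>; it does not decrease distances.
  By compactness the orbit of \<open>(x, y)\<close> under \<open>g \<times> g\<close> returns arbitrarily close to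
  \<open>(x, y)\<close>, say \<open>g\<^sup>k x \<approx> x\<close> and \<open>g\<^sup>k y \<approx> y\<close> with \<open>k \<ge> 1\<close>. Applying \<open>\<psi>\<close> once gives
  \<open>g\<^sup>k\<^sup>-\<^sup>1 x \<approx> \<psi> x\<close> and \<open>g\<^sup>k\<^sup>-\<^sup>1 y \<approx> \<psi> y\<close>, hence
  \<open>d(x, y) \<le> d(g\<^sup>k\<^sup>-\<^sup>1 x, g\<^sup>k\<^sup>-\<^sup>1 y) \<lessapprox> d(\<psi> x, \<psi> y)\<close>, so \<open>\<psi>\<close> is an isometry.
  For the measure, applying the contraction inequality to complements in a finite
  measure space gives the reverse inequality.\<close>

lemma funpow_in_invariant:
  assumes "f ` K \<subseteq> K" "x \<in> K"
  shows "(f ^^ n) x \<in> K"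
  using assms by (induction n) auto

lemma expanding_funpow:
  fixes g :: "'a::metric_space \<Rightarrow> 'a"
  assumes "g ` K \<subseteq> K"
    and expanding: "\<forall>a\<in>K. \<forall>b\<in>K. dist a b \<le> dist (g a) (g b)"
    and "a \<in> K" "b \<in> K"
  shows "dist a b \<le> dist ((g ^^ n) a) ((g ^^ n) b)"
proof (induction n)
  case 0
  show ?case by simp
next
  case (Suc n)
  have "(g ^^ n) a \<in> K" "(g ^^ n) b \<in> K"
    using funpow_in_invariant[OF assms(1)] assms(3,4) by blast+
  then show ?case
    using Suc.IH expanding by (auto intro: order_trans)
qed

lemma expanding_recurrent:
  fixes g :: "'a::metric_space \<Rightarrow> 'a"
  assumes "compact K" "g ` K \<subseteq> K"
    and expanding: "\<forall>a\<in>K. \<forall>b\<in>K. dist a b \<le> dist (g a) (g b)"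
    and "z \<in> K" "e > 0"
  shows "\<exists>k>0. dist z ((g ^^ k) z) < e"
proof -
  have orbit: "(g ^^ n) z \<in> K" for n
    using funpow_in_invariant[OF assms(2,4)] .
  obtain l r where "strict_mono r" "((\<lambda>n. (g ^^ n) z) \<circ> r) \<longlonglongrightarrow> l"
    using seq_compactE[OF compact_imp_seq_compact[OF \<open>compact K\<close>]] orbit by metis
  then obtain N where N: "\<forall>i\<ge>N. \<forall>j\<ge>N. dist ((g ^^ r i) z) ((g ^^ r j) z) < e"
    using metric_CauchyD[OF LIMSEQ_imp_Cauchy] \<open>e > 0\<close> by fastforce
  define m n where "m = r N" and "n = r (Suc N)"
  have "m < n"
    using \<open>strict_mono r\<close> by (simp add: m_def n_def strict_mono_def)
  have "dist z ((g ^^ (n - m)) z) \<le> dist ((g ^^ m) z) ((g ^^ m) ((g ^^ (n - m)) z))"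
    using expanding_funpow[OF assms(2) expanding \<open>z \<in> K\<close> orbit] .
  also have "(g ^^ m) ((g ^^ (n - m)) z) = (g ^^ n) z"
    using \<open>m < n\<close> by (metis funpow_add comp_apply le_add_diff_inverse less_imp_le)
  finally show ?thesis
    using N[rule_format, of N "Suc N"] \<open>m < n\<close> by (intro exI[of _ "n - m"]) (simp add: m_def n_def)
qed

lemma expanding_prod_map:
  fixes g :: "'a::metric_space \<Rightarrow> 'a"
  assumes "\<forall>a\<in>K. \<forall>b\<in>K. dist a b \<le> dist (g a) (g b)"
  shows "\<forall>p\<in>K \<times> K. \<forall>q\<in>K \<times> K. dist p q \<le> dist (map_prod g g p) (map_prod g g q)"
proof clarify
  fix a b c d assume "a \<in> K" "b \<in> K" "c \<in> K" "d \<in> K"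
  then have "(dist a c)\<^sup>2 + (dist b d)\<^sup>2 \<le> (dist (g a) (g c))\<^sup>2 + (dist (g b) (g d))\<^sup>2"
    using assms by (intro add_mono power_mono) auto
  then show "dist (a, b) (c, d) \<le> dist (map_prod g g (a, b)) (map_prod g g (c, d))"
    by (simp add: dist_Pair_Pair)
qed

lemma funpow_map_prod:
  fixes f :: "'a \<Rightarrow> 'a"
  shows "(map_prod f f ^^ n) (x, y) = ((f ^^ n) x, (f ^^ n) y)"
  by (induction n) simp_all

lemma nonexpanding_surj_expanding_right_inverse:
  fixes \<psi> :: "'a::metric_space \<Rightarrow> 'a"
  assumes "\<psi> ` X = X"
    and nonexpanding: "\<forall>x\<in>X. \<forall>y\<in>X. dist (\<psi> x) (\<psi> y) \<le> dist x y"
  obtains g where "g ` X \<subseteq> X" "\<And>z. z \<in> X \<Longrightarrow> \<psi> (g z) = z"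
    "\<forall>a\<in>X. \<forall>b\<in>X. dist a b \<le> dist (g a) (g b)"
proof -
  have "\<forall>z\<in>X. \<exists>w. w \<in> X \<and> \<psi> w = z"
    using \<open>\<psi> ` X = X\<close> by force
  then obtain g where g: "\<And>z. z \<in> X \<Longrightarrow> g z \<in> X \<and> \<psi> (g z) = z"
    by metis
  show ?thesis
  proof (rule that)
    show "g ` X \<subseteq> X" "\<And>z. z \<in> X \<Longrightarrow> \<psi> (g z) = z"
      using g by auto
    show "\<forall>a\<in>X. \<forall>b\<in>X. dist a b \<le> dist (g a) (g b)"
    proof (intro ballI)
      fix a b assume "a \<in> X" "b \<in> X"
      then have "dist (\<psi> (g a)) (\<psi> (g b)) \<le> dist (g a) (g b)"
        using nonexpanding g by blast
      with \<open>a \<in> X\<close> \<open>b \<in> X\<close> g show "dist a b \<le> dist (g a) (g b)"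
        by simp
    qed
  qed
qed

lemma nonexpanding_right_inverse_orbit:
  fixes \<psi> :: "'a::metric_space \<Rightarrow> 'a"
  assumes nonexpanding: "\<forall>x\<in>X. \<forall>y\<in>X. dist (\<psi> x) (\<psi> y) \<le> dist x y"
    and "g ` X \<subseteq> X" "\<And>z. z \<in> X \<Longrightarrow> \<psi> (g z) = z" "z \<in> X"
  shows "dist (\<psi> z) ((g ^^ j) z) \<le> dist z ((g ^^ Suc j) z)"
proof -
  have "(g ^^ j) z \<in> X" "(g ^^ Suc j) z \<in> X"
    using funpow_in_invariant[OF assms(2)] assms(4) by blast+
  then have "dist (\<psi> z) (\<psi> ((g ^^ Suc j) z)) \<le> dist z ((g ^^ Suc j) z)"
    using nonexpanding \<open>z \<in> X\<close> by blast
  with \<open>(g ^^ j) z \<in> X\<close> assms(3) show ?thesis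
    by simp
qed

lemma nonexpanding_surj_compact_isometry:
  fixes \<psi> :: "'a::metric_space \<Rightarrow> 'a"
  assumes "compact X" "\<psi> ` X = X"
    and nonexpanding: "\<forall>x\<in>X. \<forall>y\<in>X. dist (\<psi> x) (\<psi> y) \<le> dist x y"
    and "x \<in> X" "y \<in> X"
  shows "dist (\<psi> x) (\<psi> y) = dist x y"
proof -
  obtain g where gX: "g ` X \<subseteq> X" and \<psi>_g: "\<And>z. z \<in> X \<Longrightarrow> \<psi> (g z) = z"
    and g_expanding: "\<forall>a\<in>X. \<forall>b\<in>X. dist a b \<le> dist (g a) (g b)"
    using nonexpanding_surj_expanding_right_inverse[OF \<open>\<psi> ` X = X\<close> nonexpanding] by blast
  have approx: "dist x y \<le> dist (\<psi> x) (\<psi> y) + 2 * e" if "e > 0" for e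
  proof -
    have "map_prod g g ` (X \<times> X) \<subseteq> X \<times> X"
      using gX by auto
    then obtain k where "k > 0" and return: "dist (x, y) ((g ^^ k) x, (g ^^ k) y) < e"
      using expanding_recurrent[OF compact_Times[OF \<open>compact X\<close> \<open>compact X\<close>] _
          expanding_prod_map[OF g_expanding], of "(x, y)"] \<open>e > 0\<close> \<open>x \<in> X\<close> \<open>y \<in> X\<close>
      by (auto simp: funpow_map_prod)
    then obtain j where k: "k = Suc j"
      using gr0_implies_Suc by blast
    have "dist (\<psi> x) ((g ^^ j) x) \<le> dist (x, y) ((g ^^ k) x, (g ^^ k) y)"
      using nonexpanding_right_inverse_orbit[OF nonexpanding gX \<psi>_g \<open>x \<in> X\<close>, of j]
        dist_fst_le[of "(x, y)" "((g ^^ k) x, (g ^^ k) y)"] k by simp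
    moreover have "dist (\<psi> y) ((g ^^ j) y) \<le> dist (x, y) ((g ^^ k) x, (g ^^ k) y)"
      using nonexpanding_right_inverse_orbit[OF nonexpanding gX \<psi>_g \<open>y \<in> X\<close>, of j]
        dist_snd_le[of "(x, y)" "((g ^^ k) x, (g ^^ k) y)"] k by simp
    moreover have "dist x y \<le> dist ((g ^^ j) x) ((g ^^ j) y)"
      using expanding_funpow[OF gX g_expanding \<open>x \<in> X\<close> \<open>y \<in> X\<close>] .
    moreover have "dist ((g ^^ j) x) ((g ^^ j) y)
        \<le> dist (\<psi> x) ((g ^^ j) x) + dist (\<psi> x) (\<psi> y) + dist (\<psi> y) ((g ^^ j) y)"
      using dist_triangle[of "(g ^^ j) x" "(g ^^ j) y" "\<psi> x"]
        dist_triangle[of "\<psi> x" "(g ^^ j) y" "\<psi> y"] by (simp add: dist_commute)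
    ultimately show ?thesis
      using return by linarith
  qed
  have "dist x y \<le> dist (\<psi> x) (\<psi> y)"
  proof (rule field_le_epsilon)
    fix e :: real assume "e > 0"
    then show "dist x y \<le> dist (\<psi> x) (\<psi> y) + e"
      using approx[of "e / 2"] by simp
  qed
  with nonexpanding \<open>x \<in> X\<close> \<open>y \<in> X\<close> show ?thesis
    by (simp add: antisym)
qed

lemma (in finite_measure) measure_contracting_imp_preserving:
  assumes f: "f \<in> M \<rightarrow>\<^sub>M M"
    and contracting: "\<forall>A\<in>sets M. emeasure M A \<le> emeasure M (f -` A \<inter> space M)"
  shows "measure_preserving_map M f"
  unfolding measure_preserving_map_def
proof (intro conjI f ballI antisym)
  fix A assume A: "A \<in> sets M"
  show "emeasure M A \<le> emeasure M (f -` A \<inter> space M)"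
    using contracting A by blast
  have preimage: "f -` A \<inter> space M \<in> sets M"
    using f A by (rule measurable_sets)
  have "emeasure M (space M - A) \<le> emeasure M (f -` (space M - A) \<inter> space M)"
    using contracting A by blast
  also have "f -` (space M - A) \<inter> space M = space M - (f -` A \<inter> space M)"
    using measurable_space[OF f] by auto
  finally have "measure M (space M - A) \<le> measure M (space M - (f -` A \<inter> space M))"
    by (simp add: emeasure_eq_measure)
  then show "emeasure M (f -` A \<inter> space M) \<le> emeasure M A"
    using finite_measure_compl[OF A] finite_measure_compl[OF preimage]
    by (simp add: emeasure_eq_measure)
qed

theorem lemma3p8:
  fixes X :: "'a::metric_space set" and M :: "'a measure" and \<psi> :: "'a \<Rightarrow> 'a"
  assumes "compact X"
    and "sets M = sets (restrict_space borel X)"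
    and "finite_measure M"
    and "\<psi> ` X = X"
    and "\<forall>x\<in>X. \<forall>y\<in>X. dist (\<psi> x) (\<psi> y) \<le> dist x y"
    and "\<forall>A\<in>sets M. emeasure M A \<le> emeasure M (\<psi> -` A \<inter> X)"
  shows "(\<forall>x\<in>X. \<forall>y\<in>X. dist (\<psi> x) (\<psi> y) = dist x y) \<and> measure_preserving_map M \<psi>"
proof
  show "\<forall>x\<in>X. \<forall>y\<in>X. dist (\<psi> x) (\<psi> y) = dist x y"
    using nonexpanding_surj_compact_isometry[OF assms(1,4,5)] by blast
next
  have space_M: "space M = X"
    using sets_eq_imp_space_eq[OF assms(2)] by (simp add: space_restrict_space)
  have "continuous_on X \<psi>"
    using assms(5) by (intro lipschitz_on_continuous_on[of 1] lipschitz_onI) auto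
  then have "\<psi> \<in> restrict_space borel X \<rightarrow>\<^sub>M restrict_space borel X"
    using assms(4) by (intro measurable_restrict_space2 borel_measurable_continuous_on_restrict)
      (auto simp: space_restrict_space)
  then have "\<psi> \<in> M \<rightarrow>\<^sub>M M"
    using assms(2) measurable_cong_sets by metis
  then show "measure_preserving_map M \<psi>"
    using finite_measure.measure_contracting_imp_preserving[OF assms(3)] assms(6) space_M by auto
qed

end
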